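(* For all $\eta,\varepsilon>0$ and $c,p\in\mathbb N$ there exist $\eta'>0$ and $n_0$ such that the following holds for all $n\ge n_0$. Let $H$ be a $3$-graph of order $n$ and let $X,Y\subseteq V(H)$ be disjoint sets that are both $(c,\eta)$-closed in $H$. Suppose there are at least $\varepsilon n^{4p+1}$ $(X,Y)$-bridges of length $p$. Then $X\cup Y$ is $(2c+p,\eta')$-closed in $H$.
   Context: $K_4^-$ is the $3$-graph with $4$ vertices and $3$ edges; a $K_4^-$-factor is a set of vertex-disjoint (not necessarily induced) copies of $K_4^-$ covering all vertices. Let $H$ be a $3$-graph of order $n$. For $c\in\mathbb N$ and vertices $x,y$, a set $S\subseteq V(H)$ is an $(x,y)$-connector of length $c$ if $S\cap\{x,y\}=\emptyset$, $|S|=4c-1$, and both $H[S\cup\{x\}]$ and $H[S\cup\{y\}]$ contain $K_4^-$-factors. Vertices $x,y$ are $(c,\eta)$-close if there are at least $\eta n^{4c-1}$ $(x,y)$-connectors of length $c$ in $H$. A set $U\subseteq V(H)$ is $(c,\eta)$-closed in $H$ if every two vertices of $U$ are $(c,\eta)$-close (connectors may use vertices outside $U$). For $X,Y\subseteq V(H)$, a triple $(x,y,S)$ is an $(X,Y)$-bridge of length $c$ if $x\in X$, $y\in Y$ and $S$ is an $(x,y)$-connector of length $c$. *)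

theory Defs
  imports Main "HOL-Library.Disjoint_Sets" Complex_Main
begin

definition three_graph :: "'a set \<Rightarrow> 'a set set \<Rightarrow> bool" where
  "three_graph V E \<longleftrightarrow> finite V \<and> (\<forall>e\<in>E. e \<subseteq> V \<and> card e = 3)"

text \<open>A (not necessarily induced) copy of K4^- on the 4-set Q: at least 3 of the
  4 triples inside Q are edges.\<close>
definition K4m_copy :: "'a set set \<Rightarrow> 'a set \<Rightarrow> bool" where
  "K4m_copy E Q \<longleftrightarrow> finite Q \<and> card Q = 4 \<and> 3 \<le> card {e\<in>E. e \<subseteq> Q}"

definition has_K4m_factor :: "'a set set \<Rightarrow> 'a set \<Rightarrow> bool" where
  "has_K4m_factor E T \<longleftrightarrow>
     (\<exists>P. \<Union>P = T \<and> disjoint P \<and> (\<forall>Q\<in>P. K4m_copy E Q))"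

definition connector :: "'a set \<Rightarrow> 'a set set \<Rightarrow> nat \<Rightarrow> 'a \<Rightarrow> 'a \<Rightarrow> 'a set \<Rightarrow> bool" where
  "connector V E c x y S \<longleftrightarrow> S \<subseteq> V \<and> x \<notin> S \<and> y \<notin> S \<and> card S = 4*c - 1 \<and>
     has_K4m_factor E (insert x S) \<and> has_K4m_factor E (insert y S)"

definition close :: "'a set \<Rightarrow> 'a set set \<Rightarrow> nat \<Rightarrow> real \<Rightarrow> 'a \<Rightarrow> 'a \<Rightarrow> bool" where
  "close V E c \<eta> x y \<longleftrightarrow>
     real (card {S. connector V E c x y S}) \<ge> \<eta> * real (card V) ^ (4*c - 1)"

definition closed :: "'a set \<Rightarrow> 'a set set \<Rightarrow> nat \<Rightarrow> real \<Rightarrow> 'a set \<Rightarrow> bool" where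
  "closed V E c \<eta> U \<longleftrightarrow> (\<forall>x\<in>U. \<forall>y\<in>U. x \<noteq> y \<longrightarrow> close V E c \<eta> x y)"

definition bridges :: "'a set \<Rightarrow> 'a set set \<Rightarrow> nat \<Rightarrow> 'a set \<Rightarrow> 'a set \<Rightarrow> ('a \<times> 'a \<times> 'a set) set" where
  "bridges V E c X Y = {(x, y, S). x \<in> X \<and> y \<in> Y \<and> connector V E c x y S}"

end

theory Submission
  imports Defs
begin

text \<open>
  Fix distinct x, y \<in> X \<union> Y; by symmetry x \<in> X. Only O(n^(4p)) of the \<Omega>(n^(4p+1)) bridges
  (x', y', S) meet {x, y}, and every other bridge is completed to an (x, y)-connector of length
  2c + p by two disjoint connectors S1, S2 of length c avoiding it. If y \<in> Y, then S1 joins x to x'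
  and S2 joins y' to y, and the three connectors are chained. If y \<in> X, then S1 joins x to y and
  S2 joins x' to x, and the K4^- factors of {x'} \<union> S2 and {y'} \<union> S are added on both sides.
  Closeness of X and Y leaves \<Omega>(n^(4c-1)) choices for each of S1 and S2 avoiding the O(1)
  vertices fixed before, while a connector T arises from at most |T|^2 8^|T| triples
  (bridge, S1, S2), all of whose parts lie in T.
\<close>

lemma card_subsets_le_power:
  assumes "finite V"
  shows "card {S. S \<subseteq> V \<and> card S = k} \<le> card V ^ k"
  using n_subsets[OF assms, of k] by (cases "k \<le> card V") (auto simp: binomial_le_pow binomial_eq_0)

lemma card_subsets_containing_le_power:
  assumes "finite V" "k \<ge> 1"
  shows "card {S. S \<subseteq> V \<and> card S = k \<and> v \<in> S} \<le> card V ^ (k - 1)"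
proof -
  let ?F = "{S. S \<subseteq> V \<and> card S = k \<and> v \<in> S}"
  have "inj_on (\<lambda>S. S - {v}) ?F"
    by (auto simp: inj_on_def)
  moreover have "(\<lambda>S. S - {v}) ` ?F \<subseteq> {S. S \<subseteq> V \<and> card S = k - 1}"
    using assms by (auto simp: card_Diff_singleton intro: finite_subset)
  ultimately have "card ?F \<le> card {S. S \<subseteq> V \<and> card S = k - 1}"
    using assms by (intro card_inj_on_le) auto
  also have "\<dots> \<le> card V ^ (k - 1)"
    using assms(1) by (rule card_subsets_le_power)
  finally show ?thesis .
qed

lemma card_subsets_meeting_le:
  assumes "finite V" "k \<ge> 1" "finite Z"
  shows "card {S. S \<subseteq> V \<and> card S = k \<and> S \<inter> Z \<noteq> {}} \<le> card Z * card V ^ (k - 1)"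
proof -
  let ?F = "\<lambda>v. {S. S \<subseteq> V \<and> card S = k \<and> v \<in> S}"
  have "card {S. S \<subseteq> V \<and> card S = k \<and> S \<inter> Z \<noteq> {}} \<le> card (\<Union>v\<in>Z. ?F v)"
    using assms by (intro card_mono) (auto intro!: finite_UN_I finite_subset[of _ "Pow V"])
  also have "\<dots> \<le> (\<Sum>v\<in>Z. card (?F v))"
    by (rule card_UN_le[OF assms(3)])
  also have "\<dots> \<le> (\<Sum>v\<in>Z. card V ^ (k - 1))"
    using assms by (intro sum_mono card_subsets_containing_le_power)
  finally show ?thesis by simp
qed

lemma double_counting:
  fixes a b :: real and K :: nat
  assumes "finite G" "finite C" "a \<ge> 0" "b \<ge> 0"
    and A: "\<And>g. g \<in> G \<Longrightarrow> finite (A g) \<and> a \<le> real (card (A g))"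
    and B: "\<And>g s. g \<in> G \<Longrightarrow> s \<in> A g \<Longrightarrow> finite (B g s) \<and> b \<le> real (card (B g s))"
    and f: "\<And>g s t. g \<in> G \<Longrightarrow> s \<in> A g \<Longrightarrow> t \<in> B g s \<Longrightarrow> f g s t \<in> C"
    and fibre: "\<And>T. T \<in> C \<Longrightarrow>
      card {(g, s, t). g \<in> G \<and> s \<in> A g \<and> t \<in> B g s \<and> f g s t = T} \<le> K"
  shows "real (card G) * a * b \<le> real K * real (card C)"
proof -
  define fibre_of
    where "fibre_of T = {(g, s, t). g \<in> G \<and> s \<in> A g \<and> t \<in> B g s \<and> f g s t = T}" for T
  have "real (card G) * a * b = (\<Sum>g\<in>G. a * b)"
    by simp
  also have "\<dots> \<le> (\<Sum>g\<in>G. real (card (A g)) * b)"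
    using A \<open>b \<ge> 0\<close> by (intro sum_mono mult_right_mono) auto
  also have "\<dots> \<le> (\<Sum>g\<in>G. \<Sum>s\<in>A g. real (card (B g s)))"
    using B by (intro sum_mono) (simp add: sum_bounded_below[where K = b, simplified])
  also have "\<dots> = real (card (SIGMA g:G. SIGMA s:A g. B g s))"
    using \<open>finite G\<close> A B by simp
  also have "(SIGMA g:G. SIGMA s:A g. B g s) = (\<Union>T\<in>C. fibre_of T)"
    using f by (auto simp: fibre_of_def)
  also have "card (\<Union>T\<in>C. fibre_of T) \<le> (\<Sum>T\<in>C. card (fibre_of T))"
    by (rule card_UN_le[OF \<open>finite C\<close>])
  also have "\<dots> \<le> K * card C"
    using fibre sum_bounded_above[of C "\<lambda>T. card (fibre_of T)" K] by (simp add: fibre_of_def mult.commute)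
  finally show ?thesis
    by simp
qed

lemma has_K4m_factor_Un:
  assumes "has_K4m_factor E A" "has_K4m_factor E B" "A \<inter> B = {}"
  shows "has_K4m_factor E (A \<union> B)"
proof -
  obtain P where "\<Union>P = A" "disjoint P" "\<forall>Q\<in>P. K4m_copy E Q"
    using assms(1) unfolding has_K4m_factor_def by blast
  moreover obtain P' where "\<Union>P' = B" "disjoint P'" "\<forall>Q\<in>P'. K4m_copy E Q"
    using assms(2) unfolding has_K4m_factor_def by blast
  ultimately show ?thesis
    unfolding has_K4m_factor_def using assms(3)
    by (intro exI[of _ "P \<union> P'"]) (auto intro: disjoint_union)
qed

lemma connector_sym: "connector V E c x y S \<longleftrightarrow> connector V E c y x S"
  by (auto simp: connector_def)

lemma finite_connector: "connector V E c x y S \<Longrightarrow> c \<ge> 1 \<Longrightarrow> finite S"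
  by (auto simp: connector_def intro: card_ge_0_finite)

lemma finite_connectors: "three_graph V E \<Longrightarrow> finite {S. connector V E c x y S}"
  by (rule finite_subset[of _ "Pow V"]) (auto simp: connector_def three_graph_def)

lemma connector_trans:
  assumes S: "connector V E a x u S" and T: "connector V E b u y T"
    and "a \<ge> 1" "b \<ge> 1" "u \<in> V" "x \<noteq> u" "y \<noteq> u" "S \<inter> T = {}" "x \<notin> T" "y \<notin> S"
  shows "connector V E (a + b) x y (insert u (S \<union> T))"
proof -
  have "card (insert u (S \<union> T)) = Suc (card S + card T)"
    using assms finite_connector[OF S] finite_connector[OF T]
    by (simp add: card_Un_disjoint connector_def)
  also have "\<dots> = 4 * (a + b) - 1"
    using S T \<open>a \<ge> 1\<close> \<open>b \<ge> 1\<close> by (simp add: connector_def)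
  finally have "card (insert u (S \<union> T)) = 4 * (a + b) - 1" .
  moreover have "has_K4m_factor E (insert x S \<union> insert u T)"
    using S T assms by (intro has_K4m_factor_Un) (auto simp: connector_def)
  moreover have "has_K4m_factor E (insert u S \<union> insert y T)"
    using S T assms by (intro has_K4m_factor_Un) (auto simp: connector_def)
  moreover have "insert x S \<union> insert u T = insert x (insert u (S \<union> T))"
    and "insert u S \<union> insert y T = insert y (insert u (S \<union> T))"
    by auto
  ultimately show ?thesis
    using S T assms by (auto simp: connector_def)
qed

lemma connector_Un_factor:
  assumes S: "connector V E a x y S" and "a \<ge> 1"
    and W: "has_K4m_factor E W" "W \<subseteq> V" "finite W" "card W = 4 * b"
      "W \<inter> insert x (insert y S) = {}"
  shows "connector V E (a + b) x y (S \<union> W)"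
proof -
  have "card (S \<union> W) = card S + card W"
    using W finite_connector[OF S \<open>a \<ge> 1\<close>] by (intro card_Un_disjoint) auto
  then have "card (S \<union> W) = 4 * (a + b) - 1"
    using S W \<open>a \<ge> 1\<close> by (simp add: connector_def)
  moreover have "has_K4m_factor E (insert x S \<union> W)" "has_K4m_factor E (insert y S \<union> W)"
    using S W by (intro has_K4m_factor_Un; auto simp: connector_def)+
  moreover have "insert x S \<union> W = insert x (S \<union> W)" "insert y S \<union> W = insert y (S \<union> W)"
    by auto
  ultimately show ?thesis
    using S W by (auto simp: connector_def)
qed

fun bridge_span :: "'a \<times> 'a \<times> 'a set \<Rightarrow> 'a set" where
  "bridge_span (x, y, S) = insert x (insert y S)"

lemma connector_through_bridge:
  assumes S1: "connector V E c x x' S1" and S: "connector V E p x' y' S"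
    and S2: "connector V E c y' y S2"
    and "c \<ge> 1" "p \<ge> 1" "x' \<in> V" "y' \<in> V" "x' \<noteq> y'"
    and "S1 \<inter> S2 = {}" "(S1 \<union> S2) \<inter> insert x (insert y (bridge_span (x', y', S))) = {}"
      "{x, y} \<inter> bridge_span (x', y', S) = {}"
  shows "connector V E (2 * c + p) x y (S1 \<union> S2 \<union> bridge_span (x', y', S))"
proof -
  have "connector V E (c + p) x y' (insert x' (S1 \<union> S))"
    using assms by (intro connector_trans[OF S1 S]) auto
  then have "connector V E (c + p + c) x y (insert y' (insert x' (S1 \<union> S) \<union> S2))"
    using assms by (intro connector_trans[OF _ S2]) (auto simp: connector_def)
  moreover have "insert y' (insert x' (S1 \<union> S) \<union> S2) = S1 \<union> S2 \<union> bridge_span (x', y', S)"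
    by auto
  ultimately show ?thesis
    by (simp add: add.commute add.left_commute mult_2)
qed

lemma connector_beside_bridge:
  assumes S1: "connector V E c x y S1" and S: "connector V E p x' y' S"
    and S2: "connector V E c x' x S2"
    and "c \<ge> 1" "p \<ge> 1" "x' \<in> V" "y' \<in> V" "x' \<noteq> y'"
    and "S1 \<inter> S2 = {}" "(S1 \<union> S2) \<inter> insert x (insert y (bridge_span (x', y', S))) = {}"
      "{x, y} \<inter> bridge_span (x', y', S) = {}"
  shows "connector V E (2 * c + p) x y (S1 \<union> S2 \<union> bridge_span (x', y', S))"
proof -
  define W where "W = insert x' S2 \<union> insert y' S"
  have fin: "finite S" "finite S2"
    using finite_connector S S2 assms by auto
  have "card W = card (insert x' S2) + card (insert y' S)"
    unfolding W_def using assms fin by (intro card_Un_disjoint) (auto simp: connector_def)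
  then have "card W = 4 * (c + p)"
    using S S2 fin assms by (simp add: connector_def)
  moreover have "has_K4m_factor E W"
    unfolding W_def using S S2 assms by (intro has_K4m_factor_Un) (auto simp: connector_def)
  ultimately have "connector V E (c + (c + p)) x y (S1 \<union> W)"
    using assms fin by (intro connector_Un_factor[OF S1]) (auto simp: W_def connector_def)
  moreover have "S1 \<union> W = S1 \<union> S2 \<union> bridge_span (x', y', S)"
    by (auto simp: W_def)
  ultimately show ?thesis
    by (simp add: add.assoc mult_2)
qed

lemma card_bridges_swap: "card (bridges V E p Y X) = card (bridges V E p X Y)"
proof -
  have "bridges V E p Y X = (\<lambda>(x, y, S). (y, x, S)) ` bridges V E p X Y"
    by (auto simp: bridges_def connector_sym image_iff)
  moreover have "inj_on (\<lambda>(x, y, S). (y, x, S)) (bridges V E p X Y)"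
    by (auto simp: inj_on_def)
  ultimately show ?thesis
    by (simp add: card_image)
qed

lemma finite_bridges:
  assumes "three_graph V E" "X \<subseteq> V" "Y \<subseteq> V"
  shows "finite (bridges V E p X Y)"
proof -
  have "finite V"
    using assms(1) by (simp add: three_graph_def)
  moreover have "bridges V E p X Y \<subseteq> X \<times> Y \<times> Pow V"
    by (auto simp: bridges_def connector_def)
  ultimately show ?thesis
    using assms(2,3) by (meson finite_Pow_iff finite_SigmaI finite_subset)
qed

lemma card_bridge_span:
  assumes "b \<in> bridges V E p X Y" "p \<ge> 1"
  shows "finite (bridge_span b) \<and> card (bridge_span b) \<le> 4 * p + 1"
proof -
  obtain x y S where b: "b = (x, y, S)" "connector V E p x y S"
    using assms(1) by (auto simp: bridges_def)
  then have "finite S" "card S = 4 * p - 1"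
    using finite_connector[OF b(2) assms(2)] by (auto simp: connector_def)
  then show ?thesis
    using b assms(2) by (auto simp: card_insert_if)
qed

lemma card_bridges_through_le:
  assumes "three_graph V E" "card V = n" "X \<subseteq> V" "Y \<subseteq> V" "p \<ge> 1"
  shows "card {b \<in> bridges V E p X Y. u \<in> bridge_span b} \<le> 3 * n ^ (4 * p)"
proof -
  let ?S = "{S. S \<subseteq> V \<and> card S = 4 * p - 1}"
  let ?Su = "{S. S \<subseteq> V \<and> card S = 4 * p - 1 \<and> u \<in> S}"
  have V: "finite V" "card X \<le> n" "card Y \<le> n"
    using assms card_mono[of V] by (auto simp: three_graph_def)
  then have fin: "finite X" "finite Y" "finite ?S" "finite ?Su"
    using assms by (auto intro: finite_subset[of _ "Pow V"] finite_subset[of _ V])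
  have "4 * p = Suc (4 * p - 1)" "4 * p = Suc (Suc (4 * p - 1 - 1))"
    using assms(5) by arith+
  then have pow: "n * n ^ (4 * p - 1) = n ^ (4 * p)" "n * (n * n ^ (4 * p - 1 - 1)) = n ^ (4 * p)"
    by (metis power_Suc)+
  have "{b \<in> bridges V E p X Y. u \<in> bridge_span b}
      \<subseteq> {u} \<times> Y \<times> ?S \<union> X \<times> {u} \<times> ?S \<union> X \<times> Y \<times> ?Su"
    by (auto simp: bridges_def connector_def)
  then have "card {b \<in> bridges V E p X Y. u \<in> bridge_span b}
      \<le> card ({u} \<times> Y \<times> ?S \<union> X \<times> {u} \<times> ?S \<union> X \<times> Y \<times> ?Su)"
    using fin by (intro card_mono) auto
  also have "\<dots> \<le> card ({u} \<times> Y \<times> ?S) + card (X \<times> {u} \<times> ?S) + card (X \<times> Y \<times> ?Su)"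
    by (intro order_trans[OF card_Un_le] add_mono card_Un_le le_refl)
  also have "\<dots> = card Y * card ?S + card X * card ?S + card X * (card Y * card ?Su)"
    by (simp add: card_cartesian_product)
  also have "\<dots> \<le> n * n ^ (4 * p - 1) + n * n ^ (4 * p - 1) + n * (n * n ^ (4 * p - 1 - 1))"
    using V assms(2,5) card_subsets_le_power[OF V(1), of "4 * p - 1"]
      card_subsets_containing_le_power[OF V(1), of "4 * p - 1" u]
    by (intro add_mono mult_le_mono) auto
  also have "\<dots> = 3 * n ^ (4 * p)"
    unfolding pow by simp
  finally show ?thesis .
qed

lemma card_bridges_avoiding:
  assumes "three_graph V E" "card V = n" "X \<subseteq> V" "Y \<subseteq> V" "p \<ge> 1" "finite Z"
  shows "card (bridges V E p X Y)
    \<le> card {b \<in> bridges V E p X Y. bridge_span b \<inter> Z = {}} + card Z * (3 * n ^ (4 * p))"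
proof -
  let ?B = "bridges V E p X Y"
  let ?good = "{b \<in> ?B. bridge_span b \<inter> Z = {}}"
  let ?bad = "\<Union>u\<in>Z. {b \<in> ?B. u \<in> bridge_span b}"
  have "card ?B \<le> card (?good \<union> ?bad)"
    using finite_bridges[OF assms(1,3,4)] assms(6) by (intro card_mono) auto
  also have "\<dots> \<le> card ?good + card ?bad"
    by (rule card_Un_le)
  finally have "card ?B \<le> card ?good + card ?bad" .
  moreover have "card ?bad \<le> (\<Sum>u\<in>Z. card {b \<in> ?B. u \<in> bridge_span b})"
    by (rule card_UN_le[OF assms(6)])
  moreover have "\<dots> \<le> card Z * (3 * n ^ (4 * p))"
    using sum_bounded_above[OF card_bridges_through_le[OF assms(1-5)]] by simp
  ultimately show ?thesis
    by linarith
qed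

lemma card_connectors_le_avoiding:
  assumes "three_graph V E" "card V = n" "c \<ge> 1" "finite Z"
  shows "card {S. connector V E c u v S}
    \<le> card {S. connector V E c u v S \<and> S \<inter> Z = {}} + card Z * n ^ (4 * c - 2)"
proof -
  let ?D = "{S. connector V E c u v S \<and> S \<inter> Z = {}}"
  let ?M = "{S. S \<subseteq> V \<and> card S = 4 * c - 1 \<and> S \<inter> Z \<noteq> {}}"
  have "finite V"
    using assms(1) by (simp add: three_graph_def)
  then have "card {S. connector V E c u v S} \<le> card (?D \<union> ?M)"
    by (intro card_mono) (auto simp: connector_def intro: finite_subset[of _ "Pow V"])
  also have "\<dots> \<le> card ?D + card ?M"
    by (rule card_Un_le)
  also have "card ?M \<le> card Z * n ^ (4 * c - 2)"
    using card_subsets_meeting_le[OF \<open>finite V\<close> _ assms(4), of "4 * c - 1"] assms(2,3)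
    by (simp add: numeral_2_eq_2)
  finally show ?thesis
    by simp
qed

lemma card_connectors_avoiding:
  fixes \<eta> :: real
  assumes "three_graph V E" "card V = n" "close V E c \<eta> u v" "c \<ge> 1"
    and "finite Z" "real (card Z) \<le> \<eta> / 2 * real n"
  shows "finite {S. connector V E c u v S \<and> S \<inter> Z = {}}"
    and "\<eta> / 2 * real n ^ (4 * c - 1) \<le> real (card {S. connector V E c u v S \<and> S \<inter> Z = {}})"
proof -
  show "finite {S. connector V E c u v S \<and> S \<inter> Z = {}}"
    by (rule finite_subset[OF _ finite_connectors[OF assms(1)]]) auto
  have "4 * c - 1 = Suc (4 * c - 2)"
    using assms(4) by arith
  then have "real n ^ (4 * c - 1) = real n * real n ^ (4 * c - 2)"
    by (metis power_Suc)
  then have "\<eta> / 2 * real n ^ (4 * c - 1)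
      = \<eta> * real n ^ (4 * c - 1) - (\<eta> / 2 * real n) * real n ^ (4 * c - 2)"
    by simp
  also have "\<dots> \<le> real (card {S. connector V E c u v S}) - real (card Z) * real n ^ (4 * c - 2)"
    using assms(2,3,6) by (intro diff_mono mult_right_mono) (auto simp: close_def)
  also have "\<dots> \<le> real (card {S. connector V E c u v S \<and> S \<inter> Z = {}})"
    using of_nat_mono[where 'a = real, OF card_connectors_le_avoiding[OF assms(1,2,4,5), of u v]]
    by simp
  finally show "\<eta> / 2 * real n ^ (4 * c - 1) \<le> real (card {S. connector V E c u v S \<and> S \<inter> Z = {}})" .
qed

lemma card_assemblies_le:
  assumes "finite T"
  shows "card {(g, S1, S2). P g S1 S2 \<and> S1 \<union> S2 \<union> bridge_span g = T} \<le> card T ^ 2 * 8 ^ card T"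
proof -
  have "g \<in> T \<times> T \<times> Pow T" if "bridge_span g \<subseteq> T" for g
    using that by (cases g) auto
  then have "card {(g, S1, S2). P g S1 S2 \<and> S1 \<union> S2 \<union> bridge_span g = T}
      \<le> card ((T \<times> T \<times> Pow T) \<times> Pow T \<times> Pow T)"
    using assms by (intro card_mono) blast+
  also have "\<dots> = card T ^ 2 * 8 ^ card T"
    using assms by (simp add: card_cartesian_product card_Pow power2_eq_square
        power_mult_distrib[symmetric])
  finally show ?thesis .
qed

definition assembly_bound :: "nat \<Rightarrow> nat" where
  "assembly_bound k = (4 * k - 1) ^ 2 * 8 ^ (4 * k - 1)"

lemma assembly_bound_pos: "k \<ge> 1 \<Longrightarrow> assembly_bound k > 0"
  by (simp add: assembly_bound_def)

lemma many_connectors_avoiding_bridge: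
  fixes \<eta> :: real and x y :: 'a
  assumes tg: "three_graph V E" and nV: "card V = n" and "c \<ge> 1" "p \<ge> 1"
    and large: "real (4 * c + 4 * p + 2) \<le> \<eta> / 2 * real n"
    and "b \<in> bridges V E p X Y" "close V E c \<eta> s t" "finite R" "card R \<le> 4 * c - 1"
  defines "W \<equiv> R \<union> insert x (insert y (bridge_span b))"
  shows "finite {S. connector V E c s t S \<and> S \<inter> W = {}}"
    and "\<eta> / 2 * real n ^ (4 * c - 1) \<le> real (card {S. connector V E c s t S \<and> S \<inter> W = {}})"
proof -
  have "finite (bridge_span b) \<and> card (bridge_span b) \<le> 4 * p + 1"
    using card_bridge_span assms(6) \<open>p \<ge> 1\<close> by blast
  then have "finite (insert x (insert y (bridge_span b)))"
    "card (insert x (insert y (bridge_span b))) \<le> 4 * p + 3"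
    by (auto simp: card_insert_if)
  then have "finite W" "card W \<le> 4 * c + 4 * p + 2"
    using assms(8,9) card_Un_le[of R "insert x (insert y (bridge_span b))"] \<open>c \<ge> 1\<close>
    by (auto simp: W_def)
  moreover from this(2) have "real (card W) \<le> \<eta> / 2 * real n"
    using large by (meson of_nat_le_iff order_trans)
  ultimately show "finite {S. connector V E c s t S \<and> S \<inter> W = {}}"
    and "\<eta> / 2 * real n ^ (4 * c - 1) \<le> real (card {S. connector V E c s t S \<and> S \<inter> W = {}})"
    using card_connectors_avoiding[OF tg nV assms(7) \<open>c \<ge> 1\<close>] by blast+
qed

lemma many_connectors_from_bridges:
  fixes \<eta> :: real
  assumes tg: "three_graph V E" and nV: "card V = n" and "c \<ge> 1" "p \<ge> 1" "\<eta> > 0"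
    and G: "G \<subseteq> bridges V E p X Y" "finite G"
    and large: "real (4 * c + 4 * p + 2) \<le> \<eta> / 2 * real n"
    and close_uv: "\<And>g. g \<in> G \<Longrightarrow> close V E c \<eta> (u g) (v g)"
    and close_wz: "\<And>g. g \<in> G \<Longrightarrow> close V E c \<eta> (w g) (z g)"
    and glue: "\<And>g S1 S2. g \<in> G \<Longrightarrow> connector V E c (u g) (v g) S1 \<Longrightarrow>
      connector V E c (w g) (z g) S2 \<Longrightarrow> S1 \<inter> S2 = {} \<Longrightarrow>
      (S1 \<union> S2) \<inter> insert x (insert y (bridge_span g)) = {} \<Longrightarrow>
      connector V E (2 * c + p) x y (S1 \<union> S2 \<union> bridge_span g)"
  shows "real (card G) * (\<eta> / 2 * real n ^ (4 * c - 1)) * (\<eta> / 2 * real n ^ (4 * c - 1))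
    \<le> real (assembly_bound (2 * c + p)) * real (card {T. connector V E (2 * c + p) x y T})"
proof -
  define a where "a = \<eta> / 2 * real n ^ (4 * c - 1)"
  define Z where "Z g = insert x (insert y (bridge_span g))" for g
  define A where "A g = {S1. connector V E c (u g) (v g) S1 \<and> S1 \<inter> Z g = {}}" for g
  define B where "B g S1 = {S2. connector V E c (w g) (z g) S2 \<and> S2 \<inter> (S1 \<union> Z g) = {}}"
    for g S1
  have A: "finite (A g) \<and> a \<le> real (card (A g))" if "g \<in> G" for g
    using many_connectors_avoiding_bridge[OF tg nV \<open>c \<ge> 1\<close> \<open>p \<ge> 1\<close> large _ close_uv[OF that],
        where b = g and R = "{}" and x = x and y = y] G that
    by (auto simp: a_def A_def Z_def)
  have B: "finite (B g S1) \<and> a \<le> real (card (B g S1))" if "g \<in> G" "S1 \<in> A g" for g S1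
  proof -
    have "finite S1" "card S1 = 4 * c - 1"
      using that(2) finite_connector \<open>c \<ge> 1\<close> by (auto simp: A_def connector_def)
    then show ?thesis
      using many_connectors_avoiding_bridge[OF tg nV \<open>c \<ge> 1\<close> \<open>p \<ge> 1\<close> large _ close_wz[OF that(1)],
          where b = g and R = S1 and x = x and y = y] G that(1)
      by (auto simp: a_def B_def Z_def)
  qed
  have glued: "S1 \<union> S2 \<union> bridge_span g \<in> {T. connector V E (2 * c + p) x y T}"
    if "g \<in> G" "S1 \<in> A g" "S2 \<in> B g S1" for g S1 S2
    using glue[OF that(1), of S1 S2] that(2,3) unfolding A_def B_def Z_def by blast
  have fibre: "card {(g, S1, S2). g \<in> G \<and> S1 \<in> A g \<and> S2 \<in> B g S1 \<and>
      S1 \<union> S2 \<union> bridge_span g = T} \<le> assembly_bound (2 * c + p)"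
    if "T \<in> {T. connector V E (2 * c + p) x y T}" for T
  proof -
    have "finite T" "card T = 4 * (2 * c + p) - 1"
      using that finite_connector[of V E "2 * c + p" x y T] \<open>c \<ge> 1\<close>
      by (auto simp: connector_def)
    then show ?thesis
      using card_assemblies_le[of T "\<lambda>g S1 S2. g \<in> G \<and> S1 \<in> A g \<and> S2 \<in> B g S1"]
      by (simp add: assembly_bound_def conj_assoc)
  qed
  have "a \<ge> 0"
    using \<open>\<eta> > 0\<close> by (simp add: a_def)
  then show ?thesis
    unfolding a_def[symmetric]
    using double_counting[where f = "\<lambda>g S1 S2. S1 \<union> S2 \<union> bridge_span g",
          OF G(2) finite_connectors[OF tg] _ _ A B glued fibre] by blast
qed

lemma many_bridges_avoiding_pair:
  fixes \<epsilon> :: real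
  assumes "three_graph V E" "card V = n" "X \<subseteq> V" "Y \<subseteq> V" "p \<ge> 1" "\<epsilon> > 0"
    and "12 / \<epsilon> \<le> real n" "\<epsilon> * real n ^ (4 * p + 1) \<le> real (card (bridges V E p X Y))"
  shows "\<epsilon> / 2 * real n ^ (4 * p + 1)
    \<le> real (card {b \<in> bridges V E p X Y. bridge_span b \<inter> {x, y} = {}})"
proof -
  let ?G = "{b \<in> bridges V E p X Y. bridge_span b \<inter> {x, y} = {}}"
  have "card {x, y} * (3 * n ^ (4 * p)) \<le> 2 * (3 * n ^ (4 * p))"
    by (intro mult_le_mono1) (cases "x = y"; simp)
  moreover have "finite {x, y}"
    by simp
  ultimately have "card (bridges V E p X Y) \<le> card ?G + 2 * (3 * n ^ (4 * p))"
    using card_bridges_avoiding[OF assms(1-5)] by (meson add_left_mono order_trans)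
  then have "real (card (bridges V E p X Y)) \<le> real (card ?G) + 6 * real n ^ (4 * p)"
    using of_nat_mono by fastforce
  moreover have "6 * real n ^ (4 * p) \<le> \<epsilon> / 2 * real n * real n ^ (4 * p)"
    using assms(6,7) by (intro mult_right_mono) (auto simp: field_simps)
  ultimately show ?thesis
    using assms(8) by (simp add: algebra_simps)
qed

lemma many_connectors_across:
  fixes \<eta> :: real
  assumes tg: "three_graph V E" and nV: "card V = n" and XV: "X \<subseteq> V" and YV: "Y \<subseteq> V"
    and XY: "X \<inter> Y = {}" and cX: "closed V E c \<eta> X" and cY: "closed V E c \<eta> Y"
    and "c \<ge> 1" "p \<ge> 1" "\<eta> > 0" and large: "real (4 * c + 4 * p + 2) \<le> \<eta> / 2 * real n"
    and x: "x \<in> X" and y: "y \<in> Y"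
  shows "real (card {b \<in> bridges V E p X Y. bridge_span b \<inter> {x, y} = {}})
      * (\<eta> / 2 * real n ^ (4 * c - 1)) * (\<eta> / 2 * real n ^ (4 * c - 1))
    \<le> real (assembly_bound (2 * c + p)) * real (card {T. connector V E (2 * c + p) x y T})"
proof (rule many_connectors_from_bridges[OF tg nV \<open>c \<ge> 1\<close> \<open>p \<ge> 1\<close> \<open>\<eta> > 0\<close> _ _ large,
      where u = "\<lambda>_. x" and v = fst and w = "\<lambda>g. fst (snd g)" and z = "\<lambda>_. y"])
  show "{b \<in> bridges V E p X Y. bridge_span b \<inter> {x, y} = {}} \<subseteq> bridges V E p X Y"
    "finite {b \<in> bridges V E p X Y. bridge_span b \<inter> {x, y} = {}}"
    using finite_bridges[OF tg XV YV] by auto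
  fix g assume "g \<in> {b \<in> bridges V E p X Y. bridge_span b \<inter> {x, y} = {}}"
  moreover obtain x' y' S where g_eq: "g = (x', y', S)"
    by (cases g)
  ultimately have g: "x' \<in> V" "y' \<in> V" "x' \<in> X" "y' \<in> Y" "x' \<noteq> y'" "connector V E p x' y' S"
    "{x, y} \<inter> bridge_span (x', y', S) = {}"
    using XY XV YV by (auto simp: bridges_def)
  show "close V E c \<eta> x (fst g)" "close V E c \<eta> (fst (snd g)) y"
    using cX cY x y g g_eq unfolding closed_def by auto
  show "connector V E (2 * c + p) x y (S1 \<union> S2 \<union> bridge_span g)"
    if "connector V E c x (fst g) S1" "connector V E c (fst (snd g)) y S2" "S1 \<inter> S2 = {}"
      "(S1 \<union> S2) \<inter> insert x (insert y (bridge_span g)) = {}" for S1 S2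
    using that g \<open>c \<ge> 1\<close> \<open>p \<ge> 1\<close>
    unfolding g_eq by (intro connector_through_bridge[where S = S]) simp_all
qed

lemma many_connectors_within:
  fixes \<eta> :: real
  assumes tg: "three_graph V E" and nV: "card V = n" and XV: "X \<subseteq> V" and YV: "Y \<subseteq> V"
    and XY: "X \<inter> Y = {}" and cX: "closed V E c \<eta> X"
    and "c \<ge> 1" "p \<ge> 1" "\<eta> > 0" and large: "real (4 * c + 4 * p + 2) \<le> \<eta> / 2 * real n"
    and x: "x \<in> X" and y: "y \<in> X" and "x \<noteq> y"
  shows "real (card {b \<in> bridges V E p X Y. bridge_span b \<inter> {x, y} = {}})
      * (\<eta> / 2 * real n ^ (4 * c - 1)) * (\<eta> / 2 * real n ^ (4 * c - 1))
    \<le> real (assembly_bound (2 * c + p)) * real (card {T. connector V E (2 * c + p) x y T})"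
proof (rule many_connectors_from_bridges[OF tg nV \<open>c \<ge> 1\<close> \<open>p \<ge> 1\<close> \<open>\<eta> > 0\<close> _ _ large,
      where u = "\<lambda>_. x" and v = "\<lambda>_. y" and w = fst and z = "\<lambda>_. x"])
  show "{b \<in> bridges V E p X Y. bridge_span b \<inter> {x, y} = {}} \<subseteq> bridges V E p X Y"
    "finite {b \<in> bridges V E p X Y. bridge_span b \<inter> {x, y} = {}}"
    using finite_bridges[OF tg XV YV] by auto
  fix g assume "g \<in> {b \<in> bridges V E p X Y. bridge_span b \<inter> {x, y} = {}}"
  moreover obtain x' y' S where g_eq: "g = (x', y', S)"
    by (cases g)
  ultimately have g: "x' \<in> V" "y' \<in> V" "x' \<in> X" "x' \<noteq> y'" "connector V E p x' y' S"
    "{x, y} \<inter> bridge_span (x', y', S) = {}"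
    using XY XV YV by (auto simp: bridges_def)
  show "close V E c \<eta> x y" "close V E c \<eta> (fst g) x"
    using cX x y \<open>x \<noteq> y\<close> g g_eq unfolding closed_def by auto
  show "connector V E (2 * c + p) x y (S1 \<union> S2 \<union> bridge_span g)"
    if "connector V E c x y S1" "connector V E c (fst g) x S2" "S1 \<inter> S2 = {}"
      "(S1 \<union> S2) \<inter> insert x (insert y (bridge_span g)) = {}" for S1 S2
    using that g \<open>c \<ge> 1\<close> \<open>p \<ge> 1\<close>
    unfolding g_eq by (intro connector_beside_bridge[where S = S]) simp_all
qed

lemma close_via_bridges:
  fixes \<eta> \<epsilon> :: real
  assumes tg: "three_graph V E" and nV: "card V = n" and XV: "X \<subseteq> V" and YV: "Y \<subseteq> V"
    and XY: "X \<inter> Y = {}" and cX: "closed V E c \<eta> X" and cY: "closed V E c \<eta> Y"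
    and br: "\<epsilon> * real n ^ (4 * p + 1) \<le> real (card (bridges V E p X Y))"
    and "c \<ge> 1" "p \<ge> 1" "\<eta> > 0" "\<epsilon> > 0"
    and large: "12 / \<epsilon> \<le> real n" "real (4 * c + 4 * p + 2) \<le> \<eta> / 2 * real n"
    and x: "x \<in> X" and y: "y \<in> X \<union> Y" and "x \<noteq> y"
  shows "close V E (2 * c + p) (\<epsilon> * \<eta> ^ 2 / (8 * real (assembly_bound (2 * c + p)))) x y"
proof -
  define G where "G = {b \<in> bridges V E p X Y. bridge_span b \<inter> {x, y} = {}}"
  define a where "a = \<eta> / 2 * real n ^ (4 * c - 1)"
  define K where "K = real (assembly_bound (2 * c + p))"
  define C where "C = real (card {T. connector V E (2 * c + p) x y T})"
  have exponent: "4 * (2 * c + p) - 1 = (4 * p + 1) + (4 * c - 1) + (4 * c - 1)"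
    using \<open>c \<ge> 1\<close> by simp
  have "\<epsilon> * \<eta> ^ 2 / 8 * real n ^ (4 * (2 * c + p) - 1) = \<epsilon> / 2 * real n ^ (4 * p + 1) * a * a"
    unfolding a_def exponent power_add by (simp add: power2_eq_square field_simps mult_ac)
  also have "\<dots> \<le> real (card G) * a * a"
    using many_bridges_avoiding_pair[OF tg nV XV YV \<open>p \<ge> 1\<close> \<open>\<epsilon> > 0\<close> large(1) br] \<open>\<eta> > 0\<close>
    by (intro mult_right_mono) (auto simp: G_def a_def)
  also have "\<dots> \<le> K * C"
    using y many_connectors_across[OF tg nV XV YV XY cX cY _ _ _ large(2) x]
      many_connectors_within[OF tg nV XV YV XY cX _ _ _ large(2) x _ \<open>x \<noteq> y\<close>] assms
    unfolding G_def a_def K_def C_def by blast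
  finally show ?thesis
    using assembly_bound_pos[of "2 * c + p"] \<open>c \<ge> 1\<close>
    unfolding close_def nV C_def K_def by (simp add: field_simps)
qed

lemma closed_Un_via_bridges:
  fixes \<eta> \<epsilon> :: real
  assumes "three_graph V E" "card V = n" "X \<subseteq> V" "Y \<subseteq> V" "X \<inter> Y = {}"
    and "closed V E c \<eta> X" "closed V E c \<eta> Y"
    and "\<epsilon> * real n ^ (4 * p + 1) \<le> real (card (bridges V E p X Y))"
    and "c \<ge> 1" "p \<ge> 1" "\<eta> > 0" "\<epsilon> > 0"
    and "12 / \<epsilon> \<le> real n" "real (4 * c + 4 * p + 2) \<le> \<eta> / 2 * real n"
  shows "closed V E (2 * c + p) (\<epsilon> * \<eta> ^ 2 / (8 * real (assembly_bound (2 * c + p)))) (X \<union> Y)"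
  unfolding closed_def
proof (intro ballI impI)
  fix x y assume "x \<in> X \<union> Y" "y \<in> X \<union> Y" "x \<noteq> y"
  then consider "x \<in> X" | "x \<in> Y" "y \<in> Y \<union> X"
    by blast
  then show "close V E (2 * c + p) (\<epsilon> * \<eta> ^ 2 / (8 * real (assembly_bound (2 * c + p)))) x y"
  proof cases
    case 1
    then show ?thesis
      using assms \<open>y \<in> X \<union> Y\<close> \<open>x \<noteq> y\<close> by (intro close_via_bridges)
  next
    case 2
    then show ?thesis
      using assms \<open>x \<noteq> y\<close> card_bridges_swap[of V E p X Y]
      by (intro close_via_bridges[of V E n Y X]) auto
  qed
qed

theorem lemma5p3:
  fixes \<eta> \<epsilon> :: real and c p :: nat
  assumes "\<eta> > 0" and "\<epsilon> > 0" and "c \<ge> 1" and "p \<ge> 1"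
  shows "\<exists>\<eta>'>0. \<exists>n0::nat. \<forall>n\<ge>n0. \<forall>(V::'a set) E X Y.
     three_graph V E \<and> card V = n \<and> X \<subseteq> V \<and> Y \<subseteq> V \<and> X \<inter> Y = {} \<and>
     closed V E c \<eta> X \<and> closed V E c \<eta> Y \<and>
     real (card (bridges V E p X Y)) \<ge> \<epsilon> * real n ^ (4*p + 1)
     \<longrightarrow> closed V E (2*c + p) \<eta>' (X \<union> Y)"
proof -
  define \<eta>' where "\<eta>' = \<epsilon> * \<eta> ^ 2 / (8 * real (assembly_bound (2 * c + p)))"
  define n0 where "n0 = nat \<lceil>max (12 / \<epsilon>) (2 * real (4 * c + 4 * p + 2) / \<eta>)\<rceil>"
  have "\<eta>' > 0"
    using assms assembly_bound_pos[of "2 * c + p"] by (simp add: \<eta>'_def)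
  moreover have "closed V E (2 * c + p) \<eta>' (X \<union> Y)"
    if "n \<ge> n0" and "three_graph V E \<and> card V = n \<and> X \<subseteq> V \<and> Y \<subseteq> V \<and> X \<inter> Y = {} \<and>
      closed V E c \<eta> X \<and> closed V E c \<eta> Y \<and>
      real (card (bridges V E p X Y)) \<ge> \<epsilon> * real n ^ (4*p + 1)"
    for n and V :: "'a set" and E X Y
  proof -
    have "max (12 / \<epsilon>) (2 * real (4 * c + 4 * p + 2) / \<eta>) \<le> real n"
      using real_nat_ceiling_ge \<open>n \<ge> n0\<close> unfolding n0_def by (meson of_nat_le_iff order_trans)
    then have "12 / \<epsilon> \<le> real n" "real (4 * c + 4 * p + 2) \<le> \<eta> / 2 * real n"
      using \<open>\<eta> > 0\<close> by (auto simp: field_simps)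
    then show ?thesis
      unfolding \<eta>'_def using that(2) assms by (intro closed_Un_via_bridges) auto
  qed
  ultimately show ?thesis
    by blast
qed

end
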